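(* Let $L\ge1$ be an integer and $x_i(k)$, $i\in\mathbb Z$, $k\ge0$, real numbers. For each $i\in\mathbb Z$ and $j\in\{0,1,\dots,L\}$ define $z_{ij}(k)$ for integers $k$ as follows. If $k<j$, $z_{ij}(k)=0$. For each $s\ge j$ with $s\equiv j \pmod{L+1}$: $z_{ij}(s)=\frac{1}{2L+1}x_i(s)$; $z_{ij}(s+1)=z_{ij}(s)+z_{(i-1)j}(s)+z_{(i+1)j}(s)$; if $L\ge2$: $z_{ij}(s+2)=z_{ij}(s+1)+(z_{(i-1)j}(s+1)-z_{(i-1)j}(s))+(z_{(i+1)j}(s+1)-z_{(i+1)j}(s))-2z_{ij}(s)$; and for $3\le m\le L$: $z_{ij}(s+m)=z_{ij}(s+m-1)+(z_{(i-1)j}(s+m-1)-z_{(i-1)j}(s+m-2))+(z_{(i+1)j}(s+m-1)-z_{(i+1)j}(s+m-2))-(z_{ij}(s+m-2)-z_{ij}(s+m-3))$. (Thus each $z_{ij}(k)$, $k\ge j$, is determined by the cycle $s\le k\le s+L$ containing $k$.) For $k\ge0$ let $j_k\in\{0,\dots,L\}$ with $j_k\equiv k\pmod{L+1}$ and set $$y_i(k)=z_{ij_k}(k)+\sum_{l\in\{0,\dots,L\},\,l\neq j_k}\big(z_{il}(k)-z_{il}(k-1)\big).$$ Then for all $i$: if $k\le L$, $$y_i(k)=\frac{1}{2L+1}\Big(x_i(k)+\sum_{j=1}^{k}\big(x_{i-j}(k-j)+x_{i+j}(k-j)\big)\Big),$$ and if $k>L$, $$y_i(k)=\frac{1}{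2L+1}\Big(x_i(k)+\sum_{j=1}^{L}\big(x_{i-j}(k-j)+x_{i+j}(k-j)\big)\Big).$$
   Context: Sensors indexed by $i\in\mathbb Z$ on a line with time-varying measurements $x_i(k)$; sensor $i$ maintains an auxiliary vector $(z_{i0}(k),\dots,z_{iL}(k))$ and a consensus variable $y_i(k)$, and communicates only with sensors $i\pm1$. *)

theory Defs
  imports Complex_Main
begin

text \<open>Values within one cycle starting at time s: cyc L x0 m i = z_{ij}(s+m),
  where x0 i = x_i(s). The recursion for m = 0, 1, 2 and m >= 3 follows the paper.\<close>
fun cyc :: "nat \<Rightarrow> (int \<Rightarrow> real) \<Rightarrow> nat \<Rightarrow> int \<Rightarrow> real" where
  "cyc L x0 0 i = x0 i / (2 * real L + 1)"
| "cyc L x0 (Suc 0) i = cyc L x0 0 i + cyc L x0 0 (i - 1) + cyc L x0 0 (i + 1)"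
| "cyc L x0 (Suc (Suc 0)) i =
     cyc L x0 1 i
     + (cyc L x0 1 (i - 1) - cyc L x0 0 (i - 1))
     + (cyc L x0 1 (i + 1) - cyc L x0 0 (i + 1))
     - 2 * cyc L x0 0 i"
| "cyc L x0 (Suc (Suc (Suc m))) i =
     cyc L x0 (m + 2) i
     + (cyc L x0 (m + 2) (i - 1) - cyc L x0 (m + 1) (i - 1))
     + (cyc L x0 (m + 2) (i + 1) - cyc L x0 (m + 1) (i + 1))
     - (cyc L x0 (m + 1) i - cyc L x0 m i)"

definition zval :: "nat \<Rightarrow> (int \<Rightarrow> nat \<Rightarrow> real) \<Rightarrow> int \<Rightarrow> nat \<Rightarrow> int \<Rightarrow> real" where
  "zval L x i j k =
     (if k < int j then 0
      else (let s = int j + int (L + 1) * ((k - int j) div int (L + 1));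
                m = nat ((k - int j) mod int (L + 1))
            in cyc L (\<lambda>i'. x i' (nat s)) m i))"

definition yval :: "nat \<Rightarrow> (int \<Rightarrow> nat \<Rightarrow> real) \<Rightarrow> int \<Rightarrow> nat \<Rightarrow> real" where
  "yval L x i k =
     zval L x i (k mod (L + 1)) (int k)
     + (\<Sum>l \<in> {0..L} - {k mod (L + 1)}. zval L x i l (int k) - zval L x i l (int k - 1))"

end

theory Submission imports Defs begin

text \<open>Within a cycle, the increment of the auxiliary variable at step m + 1 is exactly the
  pair of measurements at distance m + 1 taken at the start of the cycle: by induction,
  the recursion adds the increments of both neighbours (which reach distance m + 1 on
  either side) and subtracts the previous increment, which cancels the terms pointing back
  towards i. At time k, channel k mod (L + 1) restarts a cycle and contributes x_i(k),
  while every other channel l \<le> k is (k - l) mod (L + 1) steps into its cycle; the map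
  l \<mapsto> (k - l) mod (L + 1) enumerates the lags 1, ..., min k L exactly once.\<close>

lemma cyc_Suc_minus_cyc:
  "cyc L x0 (Suc m) i - cyc L x0 m i
     = (x0 (i - int (Suc m)) + x0 (i + int (Suc m))) / (2 * real L + 1)"
proof (induction m arbitrary: i rule: less_induct)
  case (less m)
  consider "m = 0" | "m = 1" | n where "m = Suc (Suc n)"
    by (metis One_nat_def not0_implies_Suc)
  then show ?case
  proof cases
    case 1
    then show ?thesis by (simp add: add_divide_distrib)
  next
    case 2
    have "cyc L x0 2 i - cyc L x0 1 i
        = (cyc L x0 1 (i - 1) - cyc L x0 0 (i - 1)) + (cyc L x0 1 (i + 1) - cyc L x0 0 (i + 1))
          - 2 * cyc L x0 0 i"
      by (simp add: numeral_2_eq_2)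
    also have "\<dots> = (x0 (i - 2) + x0 (i + 2)) / (2 * real L + 1)"
      using less[of 0] by (simp add: add_divide_distrib diff_divide_distrib add.commute)
    finally show ?thesis using 2 by (simp add: add.commute add_divide_distrib)
  next
    case 3
    have "cyc L x0 (Suc (Suc (Suc n))) i - cyc L x0 (Suc (Suc n)) i
        = (cyc L x0 (Suc (Suc n)) (i - 1) - cyc L x0 (Suc n) (i - 1))
          + (cyc L x0 (Suc (Suc n)) (i + 1) - cyc L x0 (Suc n) (i + 1))
          - (cyc L x0 (Suc n) i - cyc L x0 n i)"
      by (simp add: numeral_2_eq_2)
    also have "\<dots> = (x0 (i - int (Suc (Suc (Suc n)))) + x0 (i + int (Suc (Suc (Suc n)))))
                    / (2 * real L + 1)"
      using less[of n] less[of "Suc n"] 3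
      by (simp add: add_divide_distrib diff_divide_distrib algebra_simps)
    finally show ?thesis using 3 by simp
  qed
qed

lemma zval_before_start: "k < int l \<Longrightarrow> zval L x i l k = 0"
  unfolding zval_def by simp

lemma zval_eq_cyc:
  assumes "m \<le> L"
  shows "zval L x i l (int (l + (L + 1) * q + m)) = cyc L (\<lambda>i'. x i' (l + (L + 1) * q)) m i"
proof -
  have shift: "int (l + (L + 1) * q + m) - int l = int m + int (L + 1) * int q"
    by (simp add: algebra_simps)
  have "int m < int (L + 1)" using assms by simp
  then have "(int (l + (L + 1) * q + m) - int l) div int (L + 1) = int q"
        and "(int (l + (L + 1) * q + m) - int l) mod int (L + 1) = int m"
    unfolding shift by simp_all
  moreover have "\<not> int (l + (L + 1) * q + m) < int l" by (subst of_nat_less_iff) simp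
  moreover have "nat (int l + int (L + 1) * int q) = l + (L + 1) * q"
    by (metis nat_int of_nat_add of_nat_mult)
  ultimately show ?thesis
    unfolding zval_def Let_def by (simp only: if_False nat_int)
qed

lemma zval_cycle_start: "zval L x i (k mod (L + 1)) (int k) = x i k / (2 * real L + 1)"
proof -
  have "k mod (L + 1) + (L + 1) * (k div (L + 1)) + 0 = k"
    by (metis add.right_neutral mod_mult_div_eq)
  then show ?thesis using zval_eq_cyc[of 0 L x i "k mod (L + 1)" "k div (L + 1)"] by simp
qed

lemma mod_diff_mod_diff:
  fixes a k N :: nat
  assumes "a \<le> k"
  shows "(k - (k - a) mod N) mod N = a mod N"
proof -
  have "k - (k - a) mod N = a + N * ((k - a) div N)"
    using assms minus_mod_eq_mult_div[of "k - a" N] mod_less_eq_dividend[of "k - a" N] by linarith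
  then show ?thesis by simp
qed

lemma zval_increment:
  assumes "l \<le> L" and "l \<le> k" and "l \<noteq> k mod (L + 1)"
  defines "m \<equiv> (k - l) mod (L + 1)"
  shows "zval L x i l (int k) - zval L x i l (int k - 1)
           = (x (i - int m) (k - m) + x (i + int m) (k - m)) / (2 * real L + 1)"
proof -
  define q where "q = (k - l) div (L + 1)"
  have k_eq: "k = l + (L + 1) * q + m"
    using assms(2) div_mult_mod_eq[of "k - l" "L + 1"] unfolding m_def q_def by (simp add: mult.commute)
  have "m \<noteq> 0"
  proof
    assume "m = 0"
    then have "k mod (L + 1) = l mod (L + 1)"
      using mod_diff_mod_diff[OF assms(2), of "L + 1"] unfolding m_def by simp
    with assms(1,3) show False by simp
  qed
  then obtain n where n: "m = Suc n" using not0_implies_Suc by blast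
  have "m \<le> L" using mod_less_divisor[of "L + 1" "k - l"] unfolding m_def by linarith
  have "int k - 1 = int (l + (L + 1) * q + n)" using k_eq n by simp
  then have "zval L x i l (int k) - zval L x i l (int k - 1)
      = cyc L (\<lambda>i'. x i' (l + (L + 1) * q)) (Suc n) i - cyc L (\<lambda>i'. x i' (l + (L + 1) * q)) n i"
    using zval_eq_cyc[of m L] zval_eq_cyc[of n L] \<open>m \<le> L\<close> k_eq n by simp
  also have "l + (L + 1) * q = k - m" using k_eq by simp
  finally show ?thesis by (simp add: cyc_Suc_minus_cyc n)
qed

lemma bij_betw_lag:
  fixes k L :: nat
  shows "bij_betw (\<lambda>l. (k - l) mod (L + 1)) {l \<in> {0..L} - {k mod (L + 1)}. l \<le> k} {1..min k L}"
proof (rule bij_betw_byWitness[where f' = "\<lambda>m. (k - m) mod (L + 1)"])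
  show "\<forall>l \<in> {l \<in> {0..L} - {k mod (L + 1)}. l \<le> k}. (k - (k - l) mod (L + 1)) mod (L + 1) = l"
  proof
    fix l :: nat assume "l \<in> {l \<in> {0..L} - {k mod (L + 1)}. l \<le> k}"
    then show "(k - (k - l) mod (L + 1)) mod (L + 1) = l"
      using mod_diff_mod_diff[of l k "L + 1"] by simp
  qed
  show "\<forall>m \<in> {1..min k L}. (k - (k - m) mod (L + 1)) mod (L + 1) = m"
    by (auto simp: mod_diff_mod_diff)
  show "(\<lambda>l. (k - l) mod (L + 1)) ` {l \<in> {0..L} - {k mod (L + 1)}. l \<le> k} \<subseteq> {1..min k L}"
  proof (rule image_subsetI)
    fix l assume "l \<in> {l \<in> {0..L} - {k mod (L + 1)}. l \<le> k}"
    then have l: "l \<le> L" "l \<noteq> k mod (L + 1)" "l \<le> k" by auto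
    have "(k - l) mod (L + 1) \<noteq> 0"
    proof
      assume "(k - l) mod (L + 1) = 0"
      then have "k mod (L + 1) = l"
        using mod_diff_mod_diff[of l k "L + 1"] l by simp
      with l show False by simp
    qed
    moreover have "(k - l) mod (L + 1) < L + 1" by simp
    moreover have "(k - l) mod (L + 1) \<le> k"
      using mod_less_eq_dividend[of "k - l" "L + 1"] by linarith
    ultimately show "(k - l) mod (L + 1) \<in> {1..min k L}" by simp
  qed
  show "(\<lambda>m. (k - m) mod (L + 1)) ` {1..min k L} \<subseteq> {l \<in> {0..L} - {k mod (L + 1)}. l \<le> k}"
  proof (rule image_subsetI)
    fix m assume "m \<in> {1..min k L}"
    then have m: "1 \<le> m" "m \<le> k" "m \<le> L" by auto
    have "(k - m) mod (L + 1) \<noteq> k mod (L + 1)"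
    proof
      assume "(k - m) mod (L + 1) = k mod (L + 1)"
      then have "m = (k - k mod (L + 1)) mod (L + 1)"
        using mod_diff_mod_diff[of m k "L + 1"] m by simp
      also have "\<dots> = 0" by (simp only: minus_mod_eq_mult_div mod_mult_self1_is_0)
      finally show False using m by simp
    qed
    moreover have "(k - m) mod (L + 1) < L + 1" by simp
    moreover have "(k - m) mod (L + 1) \<le> k"
      using mod_less_eq_dividend[of "k - m" "L + 1"] by linarith
    ultimately show "(k - m) mod (L + 1) \<in> {l \<in> {0..L} - {k mod (L + 1)}. l \<le> k}" by simp
  qed
qed

lemma yval_eq:
  "yval L x i k = (x i k + (\<Sum>j = 1..min k L. x (i - int j) (k - j) + x (i + int j) (k - j)))
                  / (2 * real L + 1)"
proof -
  define g where "g m = (x (i - int m) (k - m) + x (i + int m) (k - m)) / (2 * real L + 1)" for m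
  define D where "D l = zval L x i l (int k) - zval L x i l (int k - 1)" for l
  define S where "S = {l \<in> {0..L} - {k mod (L + 1)}. l \<le> k}"
  have "(\<Sum>l \<in> {0..L} - {k mod (L + 1)}. D l) = (\<Sum>l \<in> S. D l)"
  proof (rule sum.mono_neutral_right)
    show "\<forall>l \<in> {0..L} - {k mod (L + 1)} - S. D l = 0"
    proof
      fix l assume "l \<in> {0..L} - {k mod (L + 1)} - S"
      then have "int k < int l" "int k - 1 < int l" by (auto simp: S_def)
      then show "D l = 0" by (simp add: D_def zval_before_start)
    qed
  qed (auto simp: S_def)
  also have "\<dots> = (\<Sum>l \<in> S. g ((k - l) mod (L + 1)))"
    by (rule sum.cong) (auto simp: S_def D_def g_def zval_increment)
  also have "\<dots> = (\<Sum>m = 1..min k L. g m)"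
    using sum.reindex_bij_betw[OF bij_betw_lag] unfolding S_def .
  finally show ?thesis
    unfolding yval_def D_def g_def zval_cycle_start
    by (simp add: add_divide_distrib sum_divide_distrib)
qed

theorem theorem5:
  fixes L :: nat and x :: "int \<Rightarrow> nat \<Rightarrow> real" and i :: int and k :: nat
  assumes "L \<ge> 1"
  shows "(k \<le> L \<longrightarrow> yval L x i k =
            (1 / (2 * real L + 1)) *
              (x i k + (\<Sum>j = 1..k. x (i - int j) (k - j) + x (i + int j) (k - j))))
       \<and> (k > L \<longrightarrow> yval L x i k =
            (1 / (2 * real L + 1)) *
              (x i k + (\<Sum>j = 1..L. x (i - int j) (k - j) + x (i + int j) (k - j))))"
  by (simp add: yval_eq min_def)

end
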